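(* Let $\epsilon\in(0,1)$. Let $x\in\{0,1\}^m$ and $y\in\{0,1\}^k$ be random variables jointly satisfying the $\epsilon$-martingale condition with respect to the ordering $x_1,\dots,x_m,y_1,\dots,y_k$. Let $x'\in\{0,1\}^m$ and $y'\in\{0,1\}^k$ be independent random variables, each with independent coordinates equal to $1$ with probability $(1-\epsilon)/2$. Then \[ \Pr[\mu_x(y)\ge0]\le\Pr[\mu_{x'}(y')\ge0]\le\exp\bigl(-\epsilon^3(1-O(\epsilon))k/2\bigr). \]
   Context: Characteristic strings and forks. A characteristic string is $w=w_1\dots w_n\in\{0,1\}^n$; index $i$ is honest if $w_i=0$ and adversarial if $w_i=1$. A fork for $w$ is a rooted tree with edges directed away from the root $r$ and labeling $\ell:V\to\{0,\dots,n\}$ with (F1) $\ell(r)=0$; (F2) labels strictly increasing along directed paths; (F3) each honest index labels exactly one vertex; (F4) for honest $i<j$ the vertex labeled $i$ has strictly smaller depth than the vertex labeled $j$. Write $F\vdash w$. A vertex is honest if it is the root or labeled by an honest index. A tine is a directed path from the root; its length is its number of edges, $\ell(t)$ the label of its last vertex. A fork is closed if every leaf is honest; a closed fork has a unique longest tine $\hat t$. For closed $F\vdash w$ and tine $t$: $\mathrm{gap}(t)=\mathrm{length}(\hat t)-\mathrm{length}(t)$, $\mathrm{reserve}(t)=|\{i:w_i=1,\ i>\ell(t)\}|$, $\mathrm{reach}(t)=\mathrm{reserve}(t)-\mathrm{gap}(t)$. For $w=xy$, tines are disjoint over $y$ if they share no edge terminating at a vertex with label $>|x|$ (a tine may be paired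 with itself). $\mu_x(F)=\max\min\{\mathrm{reach}(t_1),\mathrm{reach}(t_2)\}$ over pairs disjoint over $y$, and $\mu_x(y)=\max\{\mu_x(F):F\vdash xy\text{ closed}\}$. A sequence of $\{0,1\}$-valued random variables $Z_1,\dots,Z_N$ satisfies the $\epsilon$-martingale condition if for every $t$, $\Pr[Z_t=1\mid Z_1,\dots,Z_{t-1}]\le(1-\epsilon)/2$ for arbitrary conditioning values. *)

theory Defs
  imports "HOL-Probability.Probability" "HOL-Library.Sublist"
begin

text \<open>Characteristic strings are bool lists; True = 1 (adversarial), False = 0 (honest).
  Index i (1-based, 1 <= i <= length w) corresponds to w ! (i - 1).\<close>

definition honest_idx :: "bool list \<Rightarrow> nat \<Rightarrow> bool" where
  "honest_idx w i \<longleftrightarrow> 1 \<le> i \<and> i \<le> length w \<and> \<not> w ! (i - 1)"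

definition adv_idx :: "bool list \<Rightarrow> nat \<Rightarrow> bool" where
  "adv_idx w i \<longleftrightarrow> 1 \<le> i \<and> i \<le> length w \<and> w ! (i - 1)"

text \<open>A rooted tree is represented as a finite prefix-closed set of lists.
  A vertex is the list of (label, tag) pairs along the path from the root; the root is [].
  The tag component only serves to distinguish siblings carrying the same label.
  The edges are v -> v @ [a]; the tine ending in vertex v is identified with v;
  the depth of v (= length of its tine) is length v.\<close>

type_synonym vtx = "(nat \<times> nat) list"

definition lbl :: "vtx \<Rightarrow> nat" where
  "lbl v = (if v = [] then 0 else fst (last v))"

definition is_fork :: "bool list \<Rightarrow> vtx set \<Rightarrow> bool" where
  "is_fork w F \<longleftrightarrow>
     finite F \<and> [] \<in> F \<and> (\<forall>v\<in>F. \<forall>u. prefix u v \<longrightarrow> u \<in> F) \<and>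
     \<comment> \<open>(F1),(F2): root labelled 0, labels strictly increasing along paths, labels in 0..n\<close>
     (\<forall>v\<in>F. sorted_wrt (<) (0 # map fst v) \<and> (\<forall>a\<in>set v. fst a \<le> length w)) \<and>
     \<comment> \<open>(F3)\<close>
     (\<forall>i. honest_idx w i \<longrightarrow> (\<exists>!v. v \<in> F \<and> v \<noteq> [] \<and> lbl v = i)) \<and>
     \<comment> \<open>(F4)\<close>
     (\<forall>u\<in>F. \<forall>v\<in>F. u \<noteq> [] \<longrightarrow> v \<noteq> [] \<longrightarrow> honest_idx w (lbl u) \<longrightarrow>
        honest_idx w (lbl v) \<longrightarrow> lbl u < lbl v \<longrightarrow> length u < length v)"

definition closed_fork :: "bool list \<Rightarrow> vtx set \<Rightarrow> bool" where
  "closed_fork w F \<longleftrightarrow> is_fork w F \<and>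
     (\<forall>v\<in>F. (\<forall>a. v @ [a] \<notin> F) \<longrightarrow> v = [] \<or> honest_idx w (lbl v))"

definition height :: "vtx set \<Rightarrow> nat" where
  "height F = Max (length ` F)"

definition gap :: "vtx set \<Rightarrow> vtx \<Rightarrow> nat" where
  "gap F t = height F - length t"

definition reserve :: "bool list \<Rightarrow> vtx \<Rightarrow> nat" where
  "reserve w t = card {i. adv_idx w i \<and> i > lbl t}"

definition reach :: "bool list \<Rightarrow> vtx set \<Rightarrow> vtx \<Rightarrow> int" where
  "reach w F t = int (reserve w t) - int (gap F t)"

definition disjoint_over :: "nat \<Rightarrow> vtx \<Rightarrow> vtx \<Rightarrow> bool" where
  "disjoint_over n0 t1 t2 \<longleftrightarrow>
     (\<forall>u. u \<noteq> [] \<longrightarrow> prefix u t1 \<longrightarrow> prefix u t2 \<longrightarrow> lbl u \<le> n0)"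

definition mu_fork :: "bool list \<Rightarrow> bool list \<Rightarrow> vtx set \<Rightarrow> int" where
  "mu_fork x y F = Max {min (reach (x @ y) F t1) (reach (x @ y) F t2) | t1 t2.
      t1 \<in> F \<and> t2 \<in> F \<and> disjoint_over (length x) t1 t2}"

definition mu :: "bool list \<Rightarrow> bool list \<Rightarrow> int" where
  "mu x y = Max {mu_fork x y F | F. closed_fork (x @ y) F}"

text \<open>epsilon-martingale condition for a random string of length n (distribution P):
  Pr[Z_{t+1} = 1 | Z_1..Z_t = p] <= (1 - eps)/2 for every prefix p, written multiplicatively.\<close>
definition eps_martingale :: "real \<Rightarrow> nat \<Rightarrow> bool list pmf \<Rightarrow> bool" where
  "eps_martingale eps n P \<longleftrightarrow>
     (\<forall>t < n. \<forall>p. length p = t \<longrightarrow>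
        measure_pmf.prob P {w. take t w = p \<and> w ! t}
          \<le> (1 - eps) / 2 * measure_pmf.prob P {w. take t w = p})"

fun bern_list :: "nat \<Rightarrow> real \<Rightarrow> bool list pmf" where
  "bern_list 0 q = return_pmf []"
| "bern_list (Suc n) q = map_pmf (\<lambda>(b, bs). b # bs) (pair_pmf (bernoulli_pmf q) (bern_list n q))"

end

theory Submission
  imports Defs
begin

(* Two properties of the event \<mu>_x(y) \<ge> 0 give the theorem.

   It is upward closed: if w \<le> w' pointwise, prune a witnessing fork for w to the ancestors of
   its w'-honest vertices, and cut each witnessing tine back to its longest surviving prefix. The
   vertices cut off carry w'-adversarial labels beyond the new tip, so the reserve grows at least
   as much as the gap and reach does not decrease. For upward closed events, the
   hybrids that draw the first t coordinates from an \<epsilon>-martingale and the rest independently with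
   bias (1 - \<epsilon>)/2 are nonincreasing in t, which is the first inequality.

   It excludes Catalan slots in y: if every interval around an honest slot h contains more honest
   than adversarial slots, every tine of nonnegative reach passes through the vertex of h, so two
   tines disjoint over y cannot both have nonnegative reach. A right-to-left scan of xy detects a
   Catalan slot in y through a pair (\<sigma>, g) of counters, and under independent coordinates the
   potential \<gamma>^\<sigma> \<beta>^g with \<gamma> = 1 + 3\<epsilon>^2/4, \<beta> = (1 - \<epsilon>) \<gamma> shrinks by the factor 1 - \<epsilon>^3/2 per
   symbol of y and does not grow along x. Hence Pr[\<mu> \<ge> 0] \<le> (1 - \<epsilon>^3/2)^k \<le> exp(-\<epsilon>^3 k/2) for
   \<epsilon> \<le> 1/8, and the second inequality holds with C = 8. *)

section \<open>Catalan slots and a right-to-left scan detecting them\<close>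

definition walk_step :: "bool \<Rightarrow> int" where
  "walk_step e = (if e then 1 else -1)"

definition walk_sum :: "bool list \<Rightarrow> nat \<Rightarrow> nat \<Rightarrow> int" where
  "walk_sum w a b = (\<Sum>i\<in>{a..<b}. walk_step (w ! i))"

lemma walk_sum_self [simp]: "walk_sum w a a = 0"
  by (simp add: walk_sum_def)

lemma walk_sum_split: "a \<le> b \<Longrightarrow> b \<le> c \<Longrightarrow> walk_sum w a c = walk_sum w a b + walk_sum w b c"
  unfolding walk_sum_def by (simp add: sum.atLeastLessThan_concat)

lemma walk_sum_Cons_Suc [simp]: "walk_sum (e # s) (Suc a) (Suc b) = walk_sum s a b"
  unfolding walk_sum_def by (subst sum.shift_bounds_Suc_ivl) simp

lemma walk_sum_Cons_0: "walk_sum (e # s) 0 (Suc b) = walk_step e + walk_sum s 0 b"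
proof -
  have "walk_sum (e # s) 0 (Suc b) = walk_sum (e # s) 0 (Suc 0) + walk_sum (e # s) (Suc 0) (Suc b)"
    by (rule walk_sum_split) auto
  moreover have "walk_sum (e # s) 0 (Suc 0) = walk_step e" by (simp add: walk_sum_def)
  ultimately show ?thesis by simp
qed

text \<open>Positions are 0-based: position h of w is the slot with index h + 1 in the paper.\<close>

definition catalan_slot :: "bool list \<Rightarrow> nat \<Rightarrow> bool" where
  "catalan_slot w h \<longleftrightarrow> h < length w \<and> \<not> w ! h \<and>
     (\<forall>a b. a \<le> h \<longrightarrow> h < b \<longrightarrow> b \<le> length w \<longrightarrow> walk_sum w a b < 0)"

text \<open>A Catalan slot h of s with margin g stays a Catalan slot after prepending any string
  whose suffix sums are all at most g - 1.\<close>

definition catalan_slot_margin :: "bool list \<Rightarrow> nat \<Rightarrow> nat \<Rightarrow> bool" where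
  "catalan_slot_margin s h g \<longleftrightarrow> h < length s \<and> \<not> s ! h \<and>
     (\<forall>b. h < b \<longrightarrow> b \<le> length s \<longrightarrow> walk_sum s h b < 0) \<and>
     (\<forall>a\<le>h. walk_sum s a h \<le> 0) \<and> walk_sum s 0 h \<le> 1 - int g"

lemma catalan_slot_margin_imp_catalan_slot:
  assumes "catalan_slot_margin w h g"
  shows "catalan_slot w h"
  unfolding catalan_slot_def
proof (intro conjI allI impI)
  fix a b assume "a \<le> h" "h < b" "b \<le> length w"
  then have "walk_sum w a b = walk_sum w a h + walk_sum w h b" by (intro walk_sum_split) auto
  then show "walk_sum w a b < 0"
    using assms \<open>a \<le> h\<close> \<open>h < b\<close> \<open>b \<le> length w\<close> unfolding catalan_slot_margin_def by fastforce
qed (use assms in \<open>auto simp: catalan_slot_margin_def\<close>)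

lemma catalan_slot_margin_Cons:
  assumes "catalan_slot_margin s h g" "g \<ge> 1" "g' = (if e then g - 1 else Suc g)" "g' \<ge> 1"
  shows "catalan_slot_margin (e # s) (Suc h) g'"
  unfolding catalan_slot_margin_def
proof (intro conjI allI impI)
  have prefix_sum: "walk_sum s 0 h \<le> 1 - int g" using assms(1) by (simp add: catalan_slot_margin_def)
  show "Suc h < length (e # s)" "\<not> (e # s) ! Suc h"
    using assms(1) by (simp_all add: catalan_slot_margin_def)
  show "walk_sum (e # s) (Suc h) b < 0" if "Suc h < b" "b \<le> length (e # s)" for b
    using that assms(1) by (cases b) (auto simp: catalan_slot_margin_def)
  show "walk_sum (e # s) a (Suc h) \<le> 0" if "a \<le> Suc h" for a
    using that assms prefix_sum
    by (cases a) (auto simp: catalan_slot_margin_def walk_sum_Cons_0 walk_step_def split: if_splits)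
  show "walk_sum (e # s) 0 (Suc h) \<le> 1 - int g'"
    using assms(2-4) prefix_sum by (auto simp: walk_sum_Cons_0 walk_step_def split: if_splits)
qed

text \<open>Reading y from right to left, the state (\<sigma>, g) records the maximal prefix sum \<sigma>
  of the part read so far and the margin g of a Catalan slot in it, with g = 0 if there is none.
  The margin alone is then carried through x.\<close>

fun scan_step :: "bool \<Rightarrow> nat \<times> nat \<Rightarrow> nat \<times> nat" where
  "scan_step e (\<sigma>, g) = (if e then (Suc \<sigma>, g - 1)
      else if \<sigma> = 0 then (0, Suc g) else (\<sigma> - 1, if g = 0 then 0 else Suc g))"

fun margin_step :: "bool \<Rightarrow> nat \<Rightarrow> nat" where
  "margin_step e g = (if e then g - 1 else if g = 0 then 0 else Suc g)"

definition scan :: "bool list \<Rightarrow> nat \<times> nat" where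
  "scan y = foldr scan_step y (0, 0)"

definition margin :: "bool list \<Rightarrow> nat \<Rightarrow> nat" where
  "margin x g = foldr margin_step x g"

lemma scan_Nil [simp]: "scan [] = (0, 0)"
  by (simp add: scan_def)

lemma scan_Cons [simp]: "scan (e # s) = scan_step e (scan s)"
  by (simp add: scan_def)

lemma margin_Nil [simp]: "margin [] g = g"
  by (simp add: margin_def)

lemma margin_Cons [simp]: "margin (e # z) g = margin_step e (margin z g)"
  by (simp add: margin_def)

lemma margin_zero [simp]: "margin z 0 = 0"
  by (induction z) simp_all

lemma prefix_walk_sum_le_scan: "b \<le> length y \<Longrightarrow> walk_sum y 0 b \<le> int (fst (scan y))"
proof (induction y arbitrary: b)
  case (Cons e s)
  show ?case
  proof (cases b)
    case (Suc b')
    then have "walk_sum s 0 b' \<le> int (fst (scan s))" using Cons by simp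
    then show ?thesis using Suc by (cases "scan s") (auto simp: walk_sum_Cons_0 walk_step_def)
  qed simp
qed simp

lemma catalan_slot_margin_scan:
  "snd (scan y) \<ge> 1 \<Longrightarrow> \<exists>h. catalan_slot_margin y h (snd (scan y))"
proof (induction y)
  case (Cons e s)
  obtain \<sigma> g where st: "scan s = (\<sigma>, g)" by (cases "scan s")
  show ?case
  proof (cases "g \<ge> 1")
    case True
    then obtain h where "catalan_slot_margin s h g" using Cons st by auto
    moreover have "snd (scan (e # s)) = (if e then g - 1 else Suc g)" using st True by simp
    ultimately show ?thesis using catalan_slot_margin_Cons[OF _ True] Cons.prems by blast
  next
    case False
    then have "g = 0" "\<not> e" "\<sigma> = 0" using Cons.prems st by (auto split: if_splits)
    \<comment> \<open>all prefix sums of s are \<le> 0, so the new honest slot in front is a Catalan slot\<close>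
    moreover have "walk_sum (e # s) 0 b < 0" if b: "0 < b" "b \<le> length (e # s)" for b
    proof -
      obtain b' where "b = Suc b'" "b' \<le> length s" using b by (cases b) auto
      then show ?thesis
        using prefix_walk_sum_le_scan[of b' s] st \<open>\<sigma> = 0\<close> \<open>\<not> e\<close>
        by (simp add: walk_sum_Cons_0 walk_step_def)
    qed
    ultimately have "catalan_slot_margin (e # s) 0 1"
      unfolding catalan_slot_margin_def by auto
    then show ?thesis using st \<open>g = 0\<close> \<open>\<not> e\<close> \<open>\<sigma> = 0\<close> by auto
  qed
qed simp

lemma catalan_slot_margin_append:
  "catalan_slot_margin s h g \<Longrightarrow> g \<ge> 1 \<Longrightarrow> margin z g \<ge> 1 \<Longrightarrow>
     catalan_slot_margin (z @ s) (length z + h) (margin z g)"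
proof (induction z)
  case (Cons e z)
  have pos: "margin z g \<ge> 1"
    using Cons.prems by (cases "margin z g") (auto split: if_splits)
  have "margin (e # z) g = (if e then margin z g - 1 else Suc (margin z g))" using pos by simp
  from catalan_slot_margin_Cons[OF Cons.IH[OF Cons.prems(1,2) pos] pos this] Cons.prems
  show ?case by simp
qed simp

theorem catalan_slot_of_margin:
  assumes "margin x (snd (scan y)) \<ge> 1"
  shows "\<exists>h. length x \<le> h \<and> catalan_slot (x @ y) h"
proof -
  have g: "snd (scan y) \<ge> 1" using assms by (cases "snd (scan y)") auto
  then obtain h where "catalan_slot_margin y h (snd (scan y))" using catalan_slot_margin_scan by blast
  from catalan_slot_margin_append[OF this g assms]
  have "catalan_slot (x @ y) (length x + h)" by (rule catalan_slot_margin_imp_catalan_slot)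
  then show ?thesis using le_add1 by blast
qed

section \<open>Independent coordinates\<close>

lemma set_pmf_bern_list: "set_pmf (bern_list n q) \<subseteq> {s. length s = n}"
  by (induction n) auto

lemma finite_bool_lists_length: "finite {p :: bool list. length p = n}"
  using finite_lists_length_eq[of "UNIV :: bool set" n] by simp

lemma finite_set_pmf_bern_list: "finite (set_pmf (bern_list n q))"
  using set_pmf_bern_list finite_bool_lists_length finite_subset by blast

lemma integrable_bern_list [simp]: "integrable (measure_pmf (bern_list n q)) (f :: bool list \<Rightarrow> real)"
  by (rule integrable_measure_pmf_finite[OF finite_set_pmf_bern_list])

lemma expectation_pair_pmf:
  fixes h :: "'a \<times> 'b \<Rightarrow> real"
  assumes "finite (set_pmf A)" "finite (set_pmf B)"
  shows "measure_pmf.expectation (pair_pmf A B) h =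
         measure_pmf.expectation A (\<lambda>a. measure_pmf.expectation B (\<lambda>b. h (a, b)))"
proof -
  have "measure_pmf.expectation (pair_pmf A B) h =
        (\<Sum>x\<in>set_pmf A \<times> set_pmf B. h x * pmf (pair_pmf A B) x)"
    using assms by (intro integral_measure_pmf_real) (auto simp: set_pmf_iff)
  also have "\<dots> = (\<Sum>a\<in>set_pmf A. \<Sum>b\<in>set_pmf B. h (a, b) * (pmf A a * pmf B b))"
    by (subst sum.cartesian_product) (auto intro!: sum.cong simp: pmf_pair)
  also have "\<dots> = (\<Sum>a\<in>set_pmf A. (\<Sum>b\<in>set_pmf B. h (a, b) * pmf B b) * pmf A a)"
    by (simp add: sum_distrib_left sum_distrib_right mult_ac)
  also have "\<dots> = measure_pmf.expectation A (\<lambda>a. \<Sum>b\<in>set_pmf B. h (a, b) * pmf B b)"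
    using assms by (intro integral_measure_pmf_real[symmetric]) (auto simp: set_pmf_iff)
  also have "\<dots> = measure_pmf.expectation A (\<lambda>a. measure_pmf.expectation B (\<lambda>b. h (a, b)))"
    using assms by (intro Bochner_Integration.integral_cong refl integral_measure_pmf_real[symmetric])
      (auto simp: set_pmf_iff)
  finally show ?thesis .
qed

lemma expectation_bern_list_Suc:
  fixes f :: "bool list \<Rightarrow> real"
  assumes "0 \<le> q" "q \<le> 1"
  shows "measure_pmf.expectation (bern_list (Suc n) q) f =
    measure_pmf.expectation (bern_list n q) (\<lambda>s. q * f (True # s) + (1 - q) * f (False # s))"
proof -
  have "measure_pmf.expectation (bern_list (Suc n) q) f =
        measure_pmf.expectation (pair_pmf (bernoulli_pmf q) (bern_list n q)) (\<lambda>(b, bs). f (b # bs))"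
    by (simp add: case_prod_unfold)
  also have "\<dots> = measure_pmf.expectation (bernoulli_pmf q)
          (\<lambda>b. measure_pmf.expectation (bern_list n q) (\<lambda>bs. f (b # bs)))"
    by (subst expectation_pair_pmf) (auto simp: finite_set_pmf_bern_list)
  also have "\<dots> = measure_pmf.expectation (bern_list n q) (\<lambda>s. q * f (True # s) + (1 - q) * f (False # s))"
    using assms by simp
  finally show ?thesis .
qed

lemma expectation_bern_list_Suc_le:
  fixes f g :: "bool list \<Rightarrow> real"
  assumes "0 \<le> q" "q \<le> 1" "\<And>s. q * f (True # s) + (1 - q) * f (False # s) \<le> r * g s"
  shows "measure_pmf.expectation (bern_list (Suc n) q) f \<le> r * measure_pmf.expectation (bern_list n q) g"
proof -
  have "measure_pmf.expectation (bern_list (Suc n) q) f \<le>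
        measure_pmf.expectation (bern_list n q) (\<lambda>s. r * g s)"
    unfolding expectation_bern_list_Suc[OF assms(1,2)] by (intro integral_mono assms(3)) simp_all
  then show ?thesis by simp
qed

section \<open>A supermartingale for the scan\<close>

lemma power_le_div_power_8:
  fixes e :: real
  assumes "0 < e" "e \<le> 1/8"
  shows "e ^ (k + n) \<le> e ^ k / 8 ^ n"
proof -
  have "e ^ n \<le> (1/8) ^ n" using assms by (intro power_mono) auto
  then have "e ^ k * e ^ n \<le> e ^ k * (1/8) ^ n" using assms by (intro mult_left_mono) auto
  then show ?thesis by (simp add: power_add power_divide)
qed

locale small_eps =
  fixes \<epsilon> :: real
  assumes eps_pos: "0 < \<epsilon>" and eps_le: "\<epsilon> \<le> 1/8"
begin

definition q :: real where "q = (1 - \<epsilon>) / 2"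
definition \<gamma> :: real where "\<gamma> = 1 + 3 * \<epsilon>^2 / 4"
definition \<beta> :: real where "\<beta> = (1 - \<epsilon>) * \<gamma>"
definition \<theta> :: real where "\<theta> = 1 - \<epsilon>^3 / 2"

lemmas consts_defs = q_def \<gamma>_def \<beta>_def \<theta>_def

lemma eps_power_le: "k \<le> j \<Longrightarrow> \<epsilon> ^ j \<le> \<epsilon> ^ k / 8 ^ (j - k)"
  using power_le_div_power_8[OF eps_pos eps_le, of k "j - k"] by simp

lemma q_bounds: "0 \<le> q" "q \<le> 1"
  using eps_pos eps_le by (auto simp: q_def)

lemma \<gamma>_ge_1: "1 \<le> \<gamma>"
  by (simp add: \<gamma>_def)

lemma \<beta>_bounds: "0 < \<beta>" "\<beta> \<le> 1"
proof -
  show "0 < \<beta>" using eps_pos eps_le by (simp add: \<beta>_def \<gamma>_def add_pos_nonneg)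
  have "\<beta> = 1 - \<epsilon> + 3 * \<epsilon>^2 / 4 - 3 * \<epsilon>^3 / 4"
    by (simp add: \<beta>_def \<gamma>_def field_simps eval_nat_numeral)
  moreover have "\<epsilon>^2 \<le> \<epsilon> / 8" "0 \<le> \<epsilon>^3" using eps_power_le[of 1 2] eps_pos by simp_all
  ultimately show "\<beta> \<le> 1" using eps_pos by linarith
qed

lemma \<theta>_bounds: "0 \<le> \<theta>" "\<theta> \<le> 1"
proof -
  have "\<epsilon>^3 \<le> 1" using eps_pos eps_le by (simp add: power_le_one)
  then show "0 \<le> \<theta>" "\<theta> \<le> 1" using eps_pos by (auto simp: \<theta>_def)
qed

lemma step_ineq_origin: "q * \<gamma> + (1 - q) * \<beta> \<le> \<theta>"
proof -
  have "\<theta> - (q * \<gamma> + (1 - q) * \<beta>) = \<epsilon>/2 - \<epsilon>^2/4 - \<epsilon>^3/8 + 3*\<epsilon>^4/8"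
    by (simp add: consts_defs field_simps eval_nat_numeral)
  moreover have "\<epsilon>^2 \<le> \<epsilon> / 8" "\<epsilon>^3 \<le> \<epsilon> / 64" using eps_power_le[of 1 2] eps_power_le[of 1 3] by simp_all
  moreover have "0 < \<epsilon>" "0 < \<epsilon>^3" "0 \<le> \<epsilon>^4" "0 \<le> \<epsilon>^6" "0 \<le> \<epsilon>^8"
    using eps_pos by simp_all
  ultimately show ?thesis by linarith
qed

lemma step_ineq_sigma_zero: "q * \<gamma> + (1 - q) * \<beta>^2 \<le> \<theta> * \<beta>"
proof -
  have "\<theta> * \<beta> - (q * \<gamma> + (1 - q) * \<beta>^2) =
      \<epsilon>^2/8 - 5*\<epsilon>^3/8 + 31*\<epsilon>^4/32 - 27*\<epsilon>^5/32 + 21*\<epsilon>^6/32 - 9*\<epsilon>^7/32"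
    by (simp add: consts_defs field_simps eval_nat_numeral)
  moreover have "\<epsilon>^3 \<le> \<epsilon>^2 / 8" "\<epsilon>^5 \<le> \<epsilon>^2 / 512" "\<epsilon>^7 \<le> \<epsilon>^2 / 32768"
    using eps_power_le[of 2 3] eps_power_le[of 2 5] eps_power_le[of 2 7] by simp_all
  moreover have "0 < \<epsilon>" "0 < \<epsilon>^3" "0 \<le> \<epsilon>^4" "0 \<le> \<epsilon>^6" "0 \<le> \<epsilon>^8"
    using eps_pos by simp_all
  ultimately show ?thesis by linarith
qed

lemma step_ineq_margin_zero: "q * \<gamma>^2 + (1 - q) \<le> \<theta> * \<gamma>"
proof -
  have "\<theta> * \<gamma> - (q * \<gamma>^2 + (1 - q)) = \<epsilon>^3/4 - 9*\<epsilon>^4/32 - 3*\<epsilon>^5/32"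
    by (simp add: consts_defs field_simps eval_nat_numeral)
  moreover have "\<epsilon>^4 \<le> \<epsilon>^3 / 8" "\<epsilon>^5 \<le> \<epsilon>^3 / 64"
    using eps_power_le[of 3 4] eps_power_le[of 3 5] by simp_all
  moreover have "0 < \<epsilon>" "0 < \<epsilon>^3" "0 \<le> \<epsilon>^4" "0 \<le> \<epsilon>^6" "0 \<le> \<epsilon>^8"
    using eps_pos by simp_all
  ultimately show ?thesis by linarith
qed

lemma step_ineq_generic: "q * \<gamma>^2 + (1 - q) * \<beta>^2 \<le> \<theta> * \<gamma> * \<beta>"
proof -
  have "\<theta> * \<gamma> * \<beta> - (q * \<gamma>^2 + (1 - q) * \<beta>^2) =
      \<epsilon>^2/2 - \<epsilon>^3 + 5*\<epsilon>^4/4 - 3*\<epsilon>^5/2 + 33*\<epsilon>^6/32 - 9*\<epsilon>^7/16 + 9*\<epsilon>^8/32"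
    by (simp add: consts_defs field_simps eval_nat_numeral)
  moreover have "\<epsilon>^3 \<le> \<epsilon>^2 / 8" "\<epsilon>^5 \<le> \<epsilon>^2 / 512" "\<epsilon>^7 \<le> \<epsilon>^2 / 32768"
    using eps_power_le[of 2 3] eps_power_le[of 2 5] eps_power_le[of 2 7] by simp_all
  moreover have "0 < \<epsilon>" "0 < \<epsilon>^3" "0 \<le> \<epsilon>^4" "0 \<le> \<epsilon>^6" "0 \<le> \<epsilon>^8"
    using eps_pos by simp_all
  ultimately show ?thesis by linarith
qed

lemma margin_step_ineq: "q + (1 - q) * \<beta>^2 \<le> \<beta>"
proof -
  have "\<beta> - (q + (1 - q) * \<beta>^2) =
      \<epsilon>^2/2 - \<epsilon>^3/2 + 15*\<epsilon>^4/32 - 15*\<epsilon>^5/32 + 9*\<epsilon>^6/32 - 9*\<epsilon>^7/32"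
    by (simp add: consts_defs field_simps eval_nat_numeral)
  moreover have "\<epsilon>^3 \<le> \<epsilon>^2 / 8" "\<epsilon>^5 \<le> \<epsilon>^2 / 512" "\<epsilon>^7 \<le> \<epsilon>^2 / 32768"
    using eps_power_le[of 2 3] eps_power_le[of 2 5] eps_power_le[of 2 7] by simp_all
  moreover have "0 < \<epsilon>" "0 < \<epsilon>^3" "0 \<le> \<epsilon>^4" "0 \<le> \<epsilon>^6" "0 \<le> \<epsilon>^8"
    using eps_pos by simp_all
  ultimately show ?thesis by linarith
qed

definition potential :: "nat \<times> nat \<Rightarrow> real" where
  "potential s = \<gamma> ^ fst s * \<beta> ^ snd s"

lemma potential_scan_step:
  "q * potential (scan_step True s) + (1 - q) * potential (scan_step False s) \<le> \<theta> * potential s"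
proof -
  obtain \<sigma> g where s: "s = (\<sigma>, g)" by (cases s)
  have nonneg: "0 \<le> \<gamma> ^ i * \<beta> ^ j" for i j using \<gamma>_ge_1 \<beta>_bounds by simp
  consider "\<sigma> = 0" "g = 0" | g' where "\<sigma> = 0" "g = Suc g'"
    | \<sigma>' where "\<sigma> = Suc \<sigma>'" "g = 0" | \<sigma>' g' where "\<sigma> = Suc \<sigma>'" "g = Suc g'"
    by (cases \<sigma>; cases g) auto
  then show ?thesis
  proof cases
    case 1
    then show ?thesis using s step_ineq_origin by (simp add: potential_def)
  next
    case (2 g')
    have "(q * \<gamma> + (1 - q) * \<beta>^2) * (\<gamma> ^ 0 * \<beta> ^ g') \<le> (\<theta> * \<beta>) * (\<gamma> ^ 0 * \<beta> ^ g')"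
      by (rule mult_right_mono[OF step_ineq_sigma_zero nonneg])
    then show ?thesis using s 2 by (simp add: potential_def algebra_simps power2_eq_square)
  next
    case (3 \<sigma>')
    have "(q * \<gamma>^2 + (1 - q)) * (\<gamma> ^ \<sigma>' * \<beta> ^ 0) \<le> (\<theta> * \<gamma>) * (\<gamma> ^ \<sigma>' * \<beta> ^ 0)"
      by (rule mult_right_mono[OF step_ineq_margin_zero nonneg])
    then show ?thesis using s 3 by (simp add: potential_def algebra_simps power2_eq_square)
  next
    case (4 \<sigma>' g')
    have "(q * \<gamma>^2 + (1 - q) * \<beta>^2) * (\<gamma> ^ \<sigma>' * \<beta> ^ g') \<le> (\<theta> * \<gamma> * \<beta>) * (\<gamma> ^ \<sigma>' * \<beta> ^ g')"
      by (rule mult_right_mono[OF step_ineq_generic nonneg])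
    then show ?thesis using s 4 by (simp add: potential_def algebra_simps power2_eq_square)
  qed
qed

lemma margin_step_potential:
  "q * \<beta> ^ margin_step True g + (1 - q) * \<beta> ^ margin_step False g \<le> \<beta> ^ g"
proof (cases g)
  case (Suc g')
  have "(q + (1 - q) * \<beta>^2) * \<beta> ^ g' \<le> \<beta> * \<beta> ^ g'"
    using \<beta>_bounds by (intro mult_right_mono[OF margin_step_ineq]) simp
  then show ?thesis using Suc by (simp add: algebra_simps power2_eq_square)
qed simp

lemma expectation_potential_scan: "measure_pmf.expectation (bern_list k q) (\<lambda>y. potential (scan y)) \<le> \<theta> ^ k"
proof (induction k)
  case (Suc k)
  have "measure_pmf.expectation (bern_list (Suc k) q) (\<lambda>y. potential (scan y))
       \<le> \<theta> * measure_pmf.expectation (bern_list k q) (\<lambda>y. potential (scan y))"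
    using q_bounds potential_scan_step by (intro expectation_bern_list_Suc_le) auto
  also have "\<dots> \<le> \<theta> * \<theta> ^ k" using Suc \<theta>_bounds by (intro mult_left_mono) auto
  finally show ?case by simp
qed (simp add: potential_def)

lemma expectation_margin: "measure_pmf.expectation (bern_list m q) (\<lambda>x. \<beta> ^ margin x g) \<le> \<beta> ^ g"
proof (induction m)
  case (Suc m)
  have "measure_pmf.expectation (bern_list (Suc m) q) (\<lambda>x. \<beta> ^ margin x g)
       \<le> 1 * measure_pmf.expectation (bern_list m q) (\<lambda>x. \<beta> ^ margin x g)"
    using q_bounds margin_step_potential
    by (intro expectation_bern_list_Suc_le) (auto simp del: margin_step.simps)
  then show ?case using Suc by simp
qed simp

lemma prob_margin_scan_zero:
  "measure_pmf.prob (pair_pmf (bern_list m q) (bern_list k q)) {(x, y). margin x (snd (scan y)) = 0}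
     \<le> \<theta> ^ k"
proof -
  let ?M = "pair_pmf (bern_list m q) (bern_list k q)"
  have fin: "finite (set_pmf ?M)" by (simp add: finite_set_pmf_bern_list)
  \<comment> \<open>Markov's inequality for the potential, using \<beta> ^ 0 = 1\<close>
  have "measure_pmf.prob ?M {(x, y). margin x (snd (scan y)) = 0}
      = measure_pmf.expectation ?M (indicator {(x, y). margin x (snd (scan y)) = 0})"
    by simp
  also have "\<dots> \<le> measure_pmf.expectation ?M (\<lambda>(x, y). \<beta> ^ margin x (snd (scan y)))"
    using \<beta>_bounds by (intro integral_mono integrable_measure_pmf_finite[OF fin])
      (auto simp: indicator_def)
  also have "\<dots> = measure_pmf.expectation (pair_pmf (bern_list k q) (bern_list m q))
       (\<lambda>(y, x). \<beta> ^ margin x (snd (scan y)))"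
    by (subst pair_commute_pmf) (simp add: case_prod_unfold)
  also have "\<dots> = measure_pmf.expectation (bern_list k q)
       (\<lambda>y. measure_pmf.expectation (bern_list m q) (\<lambda>x. \<beta> ^ margin x (snd (scan y))))"
    by (subst expectation_pair_pmf) (auto simp: finite_set_pmf_bern_list)
  also have "\<dots> \<le> measure_pmf.expectation (bern_list k q) (\<lambda>y. potential (scan y))"
  proof (intro integral_mono integrable_bern_list)
    fix y
    have "\<beta> ^ snd (scan y) \<le> potential (scan y)"
      unfolding potential_def using \<beta>_bounds
        mult_right_mono[OF one_le_power[OF \<gamma>_ge_1], of "\<beta> ^ snd (scan y)" "fst (scan y)"]
      by simp
    then show "measure_pmf.expectation (bern_list m q) (\<lambda>x. \<beta> ^ margin x (snd (scan y)))
        \<le> potential (scan y)"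
      using expectation_margin order_trans by blast
  qed
  also have "\<dots> \<le> \<theta> ^ k" by (rule expectation_potential_scan)
  finally show ?thesis .
qed

end

section \<open>Forks\<close>

definition count_in :: "(nat \<Rightarrow> bool) \<Rightarrow> nat \<Rightarrow> nat \<Rightarrow> nat" where
  "count_in P a b = card {i \<in> {a<..b}. P i}"

lemma count_in_split: "a \<le> b \<Longrightarrow> b \<le> c \<Longrightarrow> count_in P a c = count_in P a b + count_in P b c"
proof -
  assume "a \<le> b" "b \<le> c"
  then have "{i \<in> {a<..c}. P i} = {i \<in> {a<..b}. P i} \<union> {i \<in> {b<..c}. P i}" by auto
  then show ?thesis unfolding count_in_def by (simp add: card_Un_disjoint disjoint_iff)
qed

lemma count_in_mono: "b \<le> c \<Longrightarrow> count_in P a b \<le> count_in P a c"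
  unfolding count_in_def by (intro card_mono) auto

lemma count_in_last: "P b \<Longrightarrow> a < b \<Longrightarrow> count_in P a b = Suc (count_in P a (b - 1))"
proof -
  assume "P b" "a < b"
  let ?S = "{i \<in> {a<..b - 1}. P i}"
  have "{i \<in> {a<..b}. P i} = insert b ?S" using \<open>P b\<close> \<open>a < b\<close> by auto
  then have "count_in P a b = card (insert b ?S)" unfolding count_in_def by (simp only:)
  also have "\<dots> = Suc (card ?S)" using \<open>a < b\<close> by (intro card_insert_disjoint) auto
  finally show ?thesis unfolding count_in_def .
qed

lemma count_in_le_card_image:
  assumes "inj_on f A" "f ` A \<subseteq> {i \<in> {a<..b}. P i}"
  shows "card A \<le> count_in P a b"
  unfolding count_in_def using assms by (intro card_inj_on_le) auto

lemma walk_sum_eq_counts: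
  assumes "b \<le> length w"
  shows "walk_sum w a b = int (count_in (adv_idx w) a b) - int (count_in (honest_idx w) a b)"
proof -
  have "walk_sum w a b = (\<Sum>i\<in>{a<..b}. walk_step (w ! (i - 1)))"
    unfolding walk_sum_def by (rule sum.reindex_bij_witness[of _ "\<lambda>i. i - 1" Suc]) auto
  also have "\<dots> = int (card ({a<..b} \<inter> {i. w ! (i - 1)})) - int (card ({a<..b} \<inter> - {i. w ! (i - 1)}))"
    by (simp add: walk_step_def sum.If_cases)
  also have "{a<..b} \<inter> {i. w ! (i - 1)} = {i \<in> {a<..b}. adv_idx w i}"
    using assms by (auto simp: adv_idx_def)
  also have "{a<..b} \<inter> - {i. w ! (i - 1)} = {i \<in> {a<..b}. honest_idx w i}"
    using assms by (auto simp: honest_idx_def)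
  finally show ?thesis by (simp add: count_in_def)
qed

lemma reserve_eq_count_in: "reserve w t = count_in (adv_idx w) (lbl t) (length w)"
  unfolding reserve_def count_in_def by (rule arg_cong[where f = card]) (auto simp: adv_idx_def)

lemma is_fork_sorted: "is_fork w F \<Longrightarrow> v \<in> F \<Longrightarrow> sorted_wrt (<) (0 # map fst v)"
  unfolding is_fork_def by blast

lemma is_fork_label_le: "is_fork w F \<Longrightarrow> v \<in> F \<Longrightarrow> a \<in> set v \<Longrightarrow> fst a \<le> length w"
  unfolding is_fork_def by blast

lemma is_fork_prefix_closed: "is_fork w F \<Longrightarrow> v \<in> F \<Longrightarrow> prefix u v \<Longrightarrow> u \<in> F"
  unfolding is_fork_def by blast

lemma is_fork_take: "is_fork w F \<Longrightarrow> v \<in> F \<Longrightarrow> take p v \<in> F"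
  using is_fork_prefix_closed take_is_prefix by blast

lemma is_fork_finite: "is_fork w F \<Longrightarrow> finite F"
  unfolding is_fork_def by blast

lemma is_fork_root: "is_fork w F \<Longrightarrow> [] \<in> F"
  unfolding is_fork_def by blast

lemma is_fork_honest_depth_less:
  "is_fork w F \<Longrightarrow> u \<in> F \<Longrightarrow> v \<in> F \<Longrightarrow> u \<noteq> [] \<Longrightarrow> v \<noteq> [] \<Longrightarrow>
     honest_idx w (lbl u) \<Longrightarrow> honest_idx w (lbl v) \<Longrightarrow> lbl u < lbl v \<Longrightarrow> length u < length v"
  unfolding is_fork_def by blast

lemma lbl_Nil [simp]: "lbl [] = 0"
  by (simp add: lbl_def)

lemma lbl_take: "0 < p \<Longrightarrow> p \<le> length t \<Longrightarrow> lbl (take p t) = fst (t ! (p - 1))"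
  unfolding lbl_def by (cases p) (auto simp: last_conv_nth min_def)

lemma lbl_take_less:
  assumes sorted: "sorted_wrt (<) (0 # map fst t)" and "i < j" "j \<le> length t"
  shows "lbl (take i t) < lbl (take j t)"
proof (cases "i = 0")
  case True
  have "t ! (j - 1) \<in> set t" using assms by (intro nth_mem) auto
  then have "0 < lbl (take j t)" using sorted assms(2,3) by (simp add: lbl_take)
  then show ?thesis using True by (simp add: lbl_def)
next
  case False
  have "sorted_wrt (<) (map fst t)" using sorted by simp
  then show ?thesis
    using False assms(2,3) by (auto simp: lbl_take sorted_wrt_iff_nth_less)
qed

lemma lbl_take_le:
  "sorted_wrt (<) (0 # map fst t) \<Longrightarrow> i \<le> j \<Longrightarrow> j \<le> length t \<Longrightarrow> lbl (take i t) \<le> lbl (take j t)"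
  using lbl_take_less by (cases "i = j") (auto intro: less_imp_le)

lemma lbl_take_le_length:
  assumes "is_fork w F" "t \<in> F" "p \<le> length t"
  shows "lbl (take p t) \<le> length w"
proof (cases "p = 0")
  case False
  then have "t ! (p - 1) \<in> set t" using assms(3) by (intro nth_mem) auto
  then show ?thesis using False assms is_fork_label_le by (simp add: lbl_take)
qed (simp add: lbl_def)

lemma length_le_height: "is_fork w F \<Longrightarrow> v \<in> F \<Longrightarrow> length v \<le> height F"
  unfolding height_def using is_fork_finite by (intro Max_ge) auto

lemma adversarial_run_le_count_in:
  assumes sorted: "sorted_wrt (<) (0 # map fst t)" and "i \<le> j" "j \<le> length t"
    and adv: "\<And>p. i < p \<Longrightarrow> p \<le> j \<Longrightarrow> adv_idx w (lbl (take p t))"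
  shows "j - i \<le> count_in (adv_idx w) (lbl (take i t)) (lbl (take j t))"
proof -
  let ?f = "\<lambda>p. lbl (take p t)"
  have "inj_on ?f {i<..j}"
    using lbl_take_less[OF sorted] \<open>j \<le> length t\<close>
    by (intro strict_mono_on_imp_inj_on strict_mono_onI) auto
  moreover have "?f ` {i<..j} \<subseteq> {l \<in> {?f i<..?f j}. adv_idx w l}"
  proof
    fix l assume "l \<in> ?f ` {i<..j}"
    then obtain p where "i < p" "p \<le> j" "l = ?f p" by auto
    then show "l \<in> {l \<in> {?f i<..?f j}. adv_idx w l}"
      using lbl_take_less[OF sorted, of i p] lbl_take_le[OF sorted, of p j] adv \<open>j \<le> length t\<close>
      by auto
  qed
  ultimately have "card {i<..j} \<le> count_in (adv_idx w) (?f i) (?f j)"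
    by (rule count_in_le_card_image)
  then show ?thesis by simp
qed

lemma adv_idx_iff_not_honest: "1 \<le> i \<Longrightarrow> i \<le> length w \<Longrightarrow> adv_idx w i \<longleftrightarrow> \<not> honest_idx w i"
  by (auto simp: adv_idx_def honest_idx_def)

lemma lbl_take_bounds:
  assumes "is_fork w F" "t \<in> F" "0 < p" "p \<le> length t"
  shows "1 \<le> lbl (take p t)" "lbl (take p t) \<le> length w"
  using lbl_take_less[OF is_fork_sorted[OF assms(1,2)], of 0 p] lbl_take_le_length[OF assms(1,2,4)] assms(3,4)
  by simp_all

definition honest_vertex :: "vtx set \<Rightarrow> nat \<Rightarrow> vtx" where
  "honest_vertex F i = (THE v. v \<in> F \<and> v \<noteq> [] \<and> lbl v = i)"

lemma honest_vertex:
  assumes "is_fork w F" "honest_idx w i"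
  shows "honest_vertex F i \<in> F" "honest_vertex F i \<noteq> []" "lbl (honest_vertex F i) = i"
proof -
  have "\<exists>!v. v \<in> F \<and> v \<noteq> [] \<and> lbl v = i" using assms unfolding is_fork_def by blast
  from theI'[OF this] show "honest_vertex F i \<in> F" "honest_vertex F i \<noteq> []" "lbl (honest_vertex F i) = i"
    unfolding honest_vertex_def by auto
qed

lemma honest_vertex_eqI:
  assumes "is_fork w F" "honest_idx w i" "v \<in> F" "v \<noteq> []" "lbl v = i"
  shows "honest_vertex F i = v"
proof -
  have "\<exists>!v. v \<in> F \<and> v \<noteq> [] \<and> lbl v = i" using assms unfolding is_fork_def by blast
  then show ?thesis using assms honest_vertex[OF assms(1,2)] by blast
qed

text \<open>Index 0 stands for the root.\<close>

definition honest_depth :: "vtx set \<Rightarrow> nat \<Rightarrow> nat" where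
  "honest_depth F i = (if i = 0 then 0 else length (honest_vertex F i))"

lemma honest_depth_less:
  assumes "is_fork w F" "i = 0 \<or> honest_idx w i" "honest_idx w j" "i < j"
  shows "honest_depth F i < honest_depth F j"
proof (cases "i = 0")
  case True
  then show ?thesis using honest_vertex(2)[OF assms(1,3)] assms(4) by (simp add: honest_depth_def)
next
  case False
  then have "honest_idx w i" using assms(2) by simp
  then have "length (honest_vertex F i) < length (honest_vertex F j)"
    using is_fork_honest_depth_less[OF assms(1)] honest_vertex[OF assms(1)] assms(3,4) by metis
  then show ?thesis using False assms(4) by (simp add: honest_depth_def)
qed

lemma honest_depth_add_count_le:
  assumes fork: "is_fork w F" and i: "i = 0 \<or> honest_idx w i" and "i \<le> j" "j = 0 \<or> honest_idx w j"
  shows "honest_depth F i + count_in (honest_idx w) i j \<le> honest_depth F j"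
proof -
  let ?H = "{l \<in> {i<..j}. honest_idx w l}"
  have "strict_mono_on ?H (honest_depth F)"
    using honest_depth_less[OF fork] by (intro strict_mono_onI) auto
  moreover have "honest_depth F ` ?H \<subseteq> {honest_depth F i<..honest_depth F j}"
    using honest_depth_less[OF fork i] honest_depth_less[OF fork, of _ j] assms(4)
    by (force simp: le_less)
  ultimately have "count_in (honest_idx w) i j \<le> card {honest_depth F i<..honest_depth F j}"
    unfolding count_in_def by (intro card_inj_on_le strict_mono_on_imp_inj_on) auto
  moreover have "honest_depth F i \<le> honest_depth F j"
    using honest_depth_less[OF fork i] assms(3,4) by (cases "i = j") (auto intro: less_imp_le)
  ultimately show ?thesis by simp
qed

lemma honest_depth_add_count_le_height:
  assumes fork: "is_fork w F" and g: "g = 0 \<or> honest_idx w g"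
  shows "honest_depth F g + count_in (honest_idx w) g (length w) \<le> height F"
proof (cases "{l \<in> {g<..length w}. honest_idx w l} = {}")
  case True
  then have "count_in (honest_idx w) g (length w) = 0" by (simp add: count_in_def)
  then show ?thesis using g length_le_height[OF fork honest_vertex(1)[OF fork]]
    by (auto simp: honest_depth_def)
next
  case False
  define j where "j = Max {l \<in> {g<..length w}. honest_idx w l}"
  have "j \<in> {l \<in> {g<..length w}. honest_idx w l}" unfolding j_def using False by (intro Max_in) auto
  moreover have "count_in (honest_idx w) g (length w) = count_in (honest_idx w) g j"
  proof -
    have "finite {l \<in> {g<..length w}. honest_idx w l}" by simp
    then have "{l \<in> {g<..length w}. honest_idx w l} = {l \<in> {g<..j}. honest_idx w l}"
      unfolding j_def by (auto simp: honest_idx_def intro: Max_ge)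
    then show ?thesis unfolding count_in_def by simp
  qed
  ultimately show ?thesis
    using honest_depth_add_count_le[OF fork g, of j] length_le_height[OF fork honest_vertex(1)[OF fork]]
    by (force simp: honest_depth_def)
qed

lemma honest_vertex_take:
  assumes "is_fork w F" "t \<in> F" "0 < p" "p \<le> length t" "honest_idx w (lbl (take p t))"
  shows "honest_vertex F (lbl (take p t)) = take p t"
proof -
  have "t \<noteq> []" using assms(3,4) by auto
  then show ?thesis
    using honest_vertex_eqI[OF assms(1,5) is_fork_take[OF assms(1,2), of p]] assms(3) by simp
qed

lemma honest_depth_take:
  assumes "is_fork w F" "t \<in> F" "p \<le> length t" "p = 0 \<or> honest_idx w (lbl (take p t))"
  shows "honest_depth F (lbl (take p t)) = p"
proof (cases "p = 0")
  case False
  then have "0 < lbl (take p t)" using lbl_take_bounds(1)[OF assms(1,2) _ assms(3)] by simp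
  then show ?thesis
    using False assms honest_vertex_take[OF assms(1,2)] by (auto simp: honest_depth_def)
qed (simp add: honest_depth_def)

section \<open>Tines through a Catalan slot\<close>

lemma count_in_honest_le_adv_before_honest:
  assumes fork: "is_fork w F" and t: "t \<in> F" and "g0 < p1" "p1 \<le> length t"
    and base: "g0 = 0 \<or> honest_idx w (lbl (take g0 t))"
    and honest: "honest_idx w (lbl (take p1 t))"
    and adv: "\<And>p. g0 < p \<Longrightarrow> p < p1 \<Longrightarrow> adv_idx w (lbl (take p t))"
  shows "count_in (honest_idx w) (lbl (take g0 t)) (lbl (take p1 t) - 1)
      \<le> count_in (adv_idx w) (lbl (take g0 t)) (lbl (take p1 t) - 1)"
proof -
  let ?g = "lbl (take g0 t)" and ?h = "lbl (take p1 t)"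
  have sorted: "sorted_wrt (<) (0 # map fst t)" by (rule is_fork_sorted[OF fork t])
  have "?g < ?h" using lbl_take_less[OF sorted] assms(3,4) .
  have "p1 - 1 - g0 \<le> count_in (adv_idx w) ?g (lbl (take (p1 - 1) t))"
    using adversarial_run_le_count_in[OF sorted, of g0 "p1 - 1" w] adv assms(3,4) by simp
  also have "\<dots> \<le> count_in (adv_idx w) ?g (?h - 1)"
    using lbl_take_less[OF sorted, of "p1 - 1" p1] assms(3,4) by (intro count_in_mono) simp
  finally have adv_count: "p1 - 1 - g0 \<le> count_in (adv_idx w) ?g (?h - 1)" .
  have "?g = 0 \<or> honest_idx w ?g" using base by auto
  then have "honest_depth F ?g + count_in (honest_idx w) ?g ?h \<le> honest_depth F ?h"
    using honest_depth_add_count_le[OF fork] \<open>?g < ?h\<close> honest by simp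
  moreover have "honest_depth F ?g = g0" "honest_depth F ?h = p1"
    using honest_depth_take[OF fork t] base honest assms(3,4) by simp_all
  moreover have "count_in (honest_idx w) ?g ?h = Suc (count_in (honest_idx w) ?g (?h - 1))"
    using count_in_last[of "honest_idx w"] honest \<open>?g < ?h\<close> by blast
  ultimately show ?thesis using adv_count by linarith
qed

lemma count_in_honest_le_adv_after_last_honest:
  assumes fork: "is_fork w F" and t: "t \<in> F" and "g0 \<le> length t"
    and base: "g0 = 0 \<or> honest_idx w (lbl (take g0 t))"
    and adv: "\<And>p. g0 < p \<Longrightarrow> p \<le> length t \<Longrightarrow> adv_idx w (lbl (take p t))"
    and reach: "0 \<le> reach w F t"
  shows "count_in (honest_idx w) (lbl (take g0 t)) (length w)
      \<le> count_in (adv_idx w) (lbl (take g0 t)) (length w)"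
proof -
  let ?g = "lbl (take g0 t)"
  have sorted: "sorted_wrt (<) (0 # map fst t)" by (rule is_fork_sorted[OF fork t])
  have "length t - g0 \<le> count_in (adv_idx w) ?g (lbl t)"
    using adversarial_run_le_count_in[OF sorted, of g0 "length t" w] adv \<open>g0 \<le> length t\<close> by simp
  moreover have "count_in (adv_idx w) ?g (length w) = count_in (adv_idx w) ?g (lbl t) + reserve w t"
    unfolding reserve_eq_count_in
    using lbl_take_le[OF sorted \<open>g0 \<le> length t\<close>] lbl_take_le_length[OF fork t, of "length t"]
    by (intro count_in_split) auto
  moreover have "height F \<le> length t + reserve w t"
    using reach unfolding reach_def gap_def by linarith
  moreover have base_lbl: "?g = 0 \<or> honest_idx w ?g" using base by auto
  then have "g0 + count_in (honest_idx w) ?g (length w) \<le> height F"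
    using honest_depth_add_count_le_height[OF fork base_lbl]
      honest_depth_take[OF fork t \<open>g0 \<le> length t\<close> base]
    by simp
  ultimately show ?thesis by linarith
qed

lemma last_honest_below:
  assumes fork: "is_fork w F" and t: "t \<in> F" and h: "honest_idx w h"
    and not_prefix: "\<not> prefix (honest_vertex F h) t"
  obtains g0 where "g0 \<le> length t" "g0 = 0 \<or> honest_idx w (lbl (take g0 t))" "lbl (take g0 t) < h"
    "\<And>p. g0 < p \<Longrightarrow> p \<le> length t \<Longrightarrow> honest_idx w (lbl (take p t)) \<Longrightarrow> h < lbl (take p t)"
proof -
  let ?lab = "\<lambda>p. lbl (take p t)"
  let ?below = "\<lambda>p. p \<le> length t \<and> (p = 0 \<or> honest_idx w (?lab p) \<and> ?lab p < h)"
  define g0 where "g0 = (GREATEST p. ?below p)"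
  have "?below g0" unfolding g0_def by (rule GreatestI_nat[of _ 0 "length t"]) auto
  then have g0: "g0 \<le> length t" "g0 = 0 \<or> honest_idx w (?lab g0)" "?lab g0 < h"
    using h by (auto simp: honest_idx_def)
  moreover have "h < ?lab p" if "g0 < p" "p \<le> length t" "honest_idx w (?lab p)" for p
  proof -
    have "honest_vertex F (?lab p) = take p t"
      using honest_vertex_take[OF fork t _ that(2,3)] that(1) by simp
    then have "?lab p \<noteq> h" using not_prefix take_is_prefix by metis
    moreover have "\<not> ?below p" using that(1) Greatest_le_nat[of ?below p "length t"]
      unfolding g0_def by fastforce
    ultimately show ?thesis using that by auto
  qed
  ultimately show ?thesis using that by blast
qed

text \<open>The hypothesis on h says that h is a Catalan slot, in terms of counts of indices.\<close>

lemma honest_vertex_prefix_of_reaching_tine: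
  assumes fork: "is_fork w F" and t: "t \<in> F" and reach: "0 \<le> reach w F t"
    and h: "honest_idx w h"
    and catalan: "\<And>a b. a < h \<Longrightarrow> h \<le> b \<Longrightarrow> b \<le> length w \<Longrightarrow>
        count_in (adv_idx w) a b < count_in (honest_idx w) a b"
  shows "prefix (honest_vertex F h) t"
proof (rule ccontr)
  assume "\<not> prefix (honest_vertex F h) t"
  let ?lab = "\<lambda>p. lbl (take p t)"
  obtain g0 where g0: "g0 \<le> length t" "g0 = 0 \<or> honest_idx w (?lab g0)" "?lab g0 < h"
    and above_h: "\<And>p. g0 < p \<Longrightarrow> p \<le> length t \<Longrightarrow> honest_idx w (?lab p) \<Longrightarrow> h < ?lab p"
    using last_honest_below[OF fork t h \<open>\<not> prefix (honest_vertex F h) t\<close>] by blast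
  have adv_iff: "adv_idx w (?lab p) \<longleftrightarrow> \<not> honest_idx w (?lab p)" if "0 < p" "p \<le> length t" for p
    using adv_idx_iff_not_honest lbl_take_bounds[OF fork t that] by blast
  show False
  proof (cases "\<exists>p. g0 < p \<and> p \<le> length t \<and> honest_idx w (?lab p)")
    case True
    define p1 where "p1 = (LEAST p. g0 < p \<and> p \<le> length t \<and> honest_idx w (?lab p))"
    have p1: "g0 < p1" "p1 \<le> length t" "honest_idx w (?lab p1)"
      using LeastI_ex[OF True] unfolding p1_def by auto
    have "adv_idx w (?lab p)" if "g0 < p" "p < p1" for p
    proof -
      have "\<not> honest_idx w (?lab p)"
        using not_less_Least[of p "\<lambda>p. g0 < p \<and> p \<le> length t \<and> honest_idx w (?lab p)"] that p1
        unfolding p1_def by auto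
      then show ?thesis using adv_iff that p1(2) by simp
    qed
    then have "count_in (honest_idx w) (?lab g0) (?lab p1 - 1) \<le> count_in (adv_idx w) (?lab g0) (?lab p1 - 1)"
      by (rule count_in_honest_le_adv_before_honest[OF fork t p1(1,2) g0(2) p1(3)])
    moreover have "h \<le> ?lab p1 - 1" "?lab p1 - 1 \<le> length w"
      using above_h[OF p1] lbl_take_bounds[OF fork t _ p1(2)] p1(1) by auto
    ultimately show False using catalan[OF g0(3)] by fastforce
  next
    case False
    then have "adv_idx w (?lab p)" if "g0 < p" "p \<le> length t" for p
      using adv_iff that by auto
    then have "count_in (honest_idx w) (?lab g0) (length w) \<le> count_in (adv_idx w) (?lab g0) (length w)"
      using count_in_honest_le_adv_after_last_honest[OF fork t g0(1,2) _ reach] by blast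
    then show False using catalan[OF g0(3), of "length w"] h by (auto simp: honest_idx_def)
  qed
qed

section \<open>Nonnegativity of \<mu>\<close>

lemma prefix_closed_takes:
  assumes "v \<in> (\<lambda>p. take p c) ` {..length c}" "prefix u v"
  shows "u \<in> (\<lambda>p. take p c) ` {..length c}"
proof -
  obtain p where p: "p \<le> length c" "v = take p c" using assms(1) by auto
  have "length u \<le> p" using prefix_length_le[OF assms(2)] p by simp
  moreover have "u = take (length u) v" using assms(2) by (metis append_eq_conv_conj prefix_def)
  ultimately show ?thesis using p by (auto simp: min_def intro!: image_eqI[of _ _ "length u"])
qed

lemma is_fork_path:
  assumes sorted: "sorted_wrt (<) (0 # map fst c)"
    and honest: "\<And>a. a \<in> set c \<Longrightarrow> honest_idx w (fst a)"
    and complete: "\<And>i. honest_idx w i \<Longrightarrow> i \<in> fst ` set c"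
  shows "is_fork w ((\<lambda>p. take p c) ` {..length c})" (is "is_fork w ?F")
  unfolding is_fork_def
proof (intro conjI ballI allI impI)
  show "finite ?F" "[] \<in> ?F" by auto
  show "u \<in> ?F" if "v \<in> ?F" "prefix u v" for u v using prefix_closed_takes that .
  show "sorted_wrt (<) (0 # map fst v)" if v: "v \<in> ?F" for v
  proof -
    obtain p where "v = take p c" using v by auto
    then show ?thesis using sorted_wrt_take[OF sorted, of "Suc p"] by (simp add: take_map)
  qed
  show "fst a \<le> length w" if v: "v \<in> ?F" and a: "a \<in> set v" for v a
  proof -
    obtain p where "v = take p c" using v by auto
    then have "honest_idx w (fst a)" using honest in_set_takeD[of a p c] a by simp
    then show ?thesis by (simp add: honest_idx_def)
  qed
next
  fix i assume "honest_idx w i"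
  then obtain a where "a \<in> set c" "fst a = i" using complete by blast
  then obtain k where k: "k < length c" "fst (c ! k) = i" by (metis in_set_conv_nth)
  have inj: "inj_on (\<lambda>p. lbl (take p c)) {..length c}"
    using lbl_take_less[OF sorted] by (intro strict_mono_on_imp_inj_on strict_mono_onI) auto
  show "\<exists>!v. v \<in> ?F \<and> v \<noteq> [] \<and> lbl v = i"
  proof (rule ex1I[of _ "take (Suc k) c"])
    show "take (Suc k) c \<in> ?F \<and> take (Suc k) c \<noteq> [] \<and> lbl (take (Suc k) c) = i"
      using k by (auto simp: lbl_take)
    show "v = take (Suc k) c" if v: "v \<in> ?F \<and> v \<noteq> [] \<and> lbl v = i" for v
    proof -
      obtain p where p: "p \<le> length c" "v = take p c" using v by auto
      have "lbl (take p c) = lbl (take (Suc k) c)" using v p k by (simp add: lbl_take)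
      then have "p = Suc k" by (rule inj_onD[OF inj]) (use p k in auto)
      then show ?thesis using p by simp
    qed
  qed
next
  fix u v assume uv: "u \<in> ?F" "v \<in> ?F" "lbl u < lbl v"
  obtain p p' where "p \<le> length c" "u = take p c" "p' \<le> length c" "v = take p' c"
    using uv(1,2) by auto
  moreover have "p < p'" using lbl_take_le[OF sorted, of p' p] uv(3) calculation by force
  ultimately show "length u < length v" by simp
qed

lemma closed_fork_exists: "\<exists>F. closed_fork w F"
proof -
  define c where "c = map (\<lambda>i. (i, 0::nat)) (filter (honest_idx w) [1..<Suc (length w)])"
  have "map fst c = filter (honest_idx w) [1..<Suc (length w)]" by (simp add: c_def comp_def)
  moreover have "sorted_wrt (<) (filter (honest_idx w) [1..<Suc (length w)])"
    using sorted_wrt_upt[of 1 "Suc (length w)"] by (intro sorted_wrt_filter)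
  ultimately have sorted: "sorted_wrt (<) (0 # map fst c)" by (simp add: honest_idx_def)
  have honest: "honest_idx w (fst a)" if "a \<in> set c" for a
    using that by (auto simp: c_def)
  have "i \<in> fst ` set c" if i: "honest_idx w i" for i
  proof -
    have "i \<in> set [1..<Suc (length w)]" using i by (auto simp: honest_idx_def)
    then have "(i, 0) \<in> set c" using i unfolding c_def by auto
    then show ?thesis by (metis fst_conv image_eqI)
  qed
  then have "is_fork w ((\<lambda>p. take p c) ` {..length c})"
    using is_fork_path[OF sorted honest] by blast
  moreover have "v = [] \<or> honest_idx w (lbl v)" if v: "v \<in> (\<lambda>p. take p c) ` {..length c}" for v
  proof -
    obtain p where "p \<le> length c" "v = take p c" using v by auto
    then show ?thesis using honest[OF nth_mem[of "p - 1" c]] by (cases "p = 0") (auto simp: lbl_take)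
  qed
  ultimately show ?thesis unfolding closed_fork_def by blast
qed

lemma count_in_le: "count_in P a b \<le> b - a"
proof -
  have "count_in P a b \<le> card {a<..b}" unfolding count_in_def by (intro card_mono) auto
  then show ?thesis by simp
qed

lemma length_le_of_fork:
  assumes fork: "is_fork w F" and v: "v \<in> F"
  shows "length v \<le> length w"
proof -
  have "inj_on (\<lambda>p. lbl (take p v)) {1..length v}"
    using lbl_take_less[OF is_fork_sorted[OF fork v]]
    by (intro strict_mono_on_imp_inj_on strict_mono_onI) auto
  moreover have "(\<lambda>p. lbl (take p v)) ` {1..length v} \<subseteq> {1..length w}"
    using lbl_take_bounds[OF fork v] by auto
  ultimately show ?thesis using card_inj_on_le[of _ "{1..length v}" "{1..length w}"] by fastforce
qed

lemma height_le_length: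
  assumes fork: "is_fork w F"
  shows "height F \<le> length w"
proof -
  have "height F \<in> length ` F"
    unfolding height_def using is_fork_finite[OF fork] is_fork_root[OF fork] by (intro Max_in) auto
  then show ?thesis using length_le_of_fork[OF fork] by auto
qed

lemma reach_abs_le:
  assumes "is_fork w F"
  shows "\<bar>reach w F t\<bar> \<le> int (length w)"
proof -
  have "gap F t \<le> length w" using height_le_length[OF assms] by (simp add: gap_def)
  moreover have "reserve w t \<le> length w"
    using count_in_le[of "adv_idx w" "lbl t" "length w"] by (simp add: reserve_eq_count_in)
  ultimately show ?thesis by (simp add: reach_def)
qed

lemma min_reach_pairs_finite_nonempty:
  assumes fork: "is_fork (x @ y) F"
  defines "S \<equiv> {min (reach (x @ y) F t1) (reach (x @ y) F t2) | t1 t2.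
      t1 \<in> F \<and> t2 \<in> F \<and> disjoint_over (length x) t1 t2}"
  shows "finite S" "S \<noteq> {}"
proof -
  have "S \<subseteq> (\<lambda>(t1, t2). min (reach (x @ y) F t1) (reach (x @ y) F t2)) ` (F \<times> F)"
    unfolding S_def by auto
  then show "finite S" using is_fork_finite[OF fork] finite_subset by blast
  have "disjoint_over (length x) [] []" by (simp add: disjoint_over_def)
  then show "S \<noteq> {}" unfolding S_def using is_fork_root[OF fork] by blast
qed

lemma mu_fork_nonneg_iff:
  assumes "is_fork (x @ y) F"
  shows "0 \<le> mu_fork x y F \<longleftrightarrow> (\<exists>t1 t2. t1 \<in> F \<and> t2 \<in> F \<and> disjoint_over (length x) t1 t2 \<and>
      0 \<le> reach (x @ y) F t1 \<and> 0 \<le> reach (x @ y) F t2)"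
  unfolding mu_fork_def using min_reach_pairs_finite_nonempty[OF assms]
  by (subst Max_ge_iff) force+

lemma mu_fork_abs_le:
  assumes fork: "is_fork (x @ y) F"
  shows "\<bar>mu_fork x y F\<bar> \<le> int (length (x @ y))"
proof -
  have "mu_fork x y F \<in> {min (reach (x @ y) F t1) (reach (x @ y) F t2) | t1 t2.
      t1 \<in> F \<and> t2 \<in> F \<and> disjoint_over (length x) t1 t2}"
    unfolding mu_fork_def using min_reach_pairs_finite_nonempty[OF fork] by (rule Max_in)
  then show ?thesis using reach_abs_le[OF fork] by (fastforce simp: min_def abs_le_iff)
qed

lemma mu_nonneg_iff:
  "0 \<le> mu x y \<longleftrightarrow> (\<exists>F t1 t2. closed_fork (x @ y) F \<and> t1 \<in> F \<and> t2 \<in> F \<and>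
      disjoint_over (length x) t1 t2 \<and> 0 \<le> reach (x @ y) F t1 \<and> 0 \<le> reach (x @ y) F t2)"
proof -
  let ?U = "{mu_fork x y F | F. closed_fork (x @ y) F}"
  have "?U \<subseteq> {- int (length (x @ y)) .. int (length (x @ y))}"
    using mu_fork_abs_le by (force simp: closed_fork_def abs_le_iff)
  then have "finite ?U" by (rule finite_subset) simp
  moreover have "?U \<noteq> {}" using closed_fork_exists by blast
  ultimately have "0 \<le> mu x y \<longleftrightarrow> (\<exists>F. closed_fork (x @ y) F \<and> 0 \<le> mu_fork x y F)"
    unfolding mu_def by (subst Max_ge_iff) auto
  moreover have "0 \<le> mu_fork x y F \<longleftrightarrow> (\<exists>t1 t2. t1 \<in> F \<and> t2 \<in> F \<and> disjoint_over (length x) t1 t2 \<and>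
      0 \<le> reach (x @ y) F t1 \<and> 0 \<le> reach (x @ y) F t2)" if "closed_fork (x @ y) F" for F
    using that mu_fork_nonneg_iff by (simp add: closed_fork_def)
  ultimately show ?thesis by blast
qed

theorem mu_nonneg_imp_no_catalan_slot:
  assumes "0 \<le> mu x y" "length x \<le> h"
  shows "\<not> catalan_slot (x @ y) h"
proof
  assume catalan: "catalan_slot (x @ y) h"
  let ?w = "x @ y"
  obtain F t1 t2 where F: "closed_fork ?w F" "t1 \<in> F" "t2 \<in> F" "disjoint_over (length x) t1 t2"
      "0 \<le> reach ?w F t1" "0 \<le> reach ?w F t2"
    using assms(1) mu_nonneg_iff by blast
  have fork: "is_fork ?w F" using F(1) by (simp add: closed_fork_def)
  have h: "honest_idx ?w (Suc h)" using catalan by (simp add: catalan_slot_def honest_idx_def)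
  have counts: "count_in (adv_idx ?w) a b < count_in (honest_idx ?w) a b"
    if "a < Suc h" "Suc h \<le> b" "b \<le> length ?w" for a b
  proof -
    have "walk_sum ?w a b < 0"
      using catalan that unfolding catalan_slot_def by (simp add: less_Suc_eq_le Suc_le_eq)
    then show ?thesis using walk_sum_eq_counts[of b ?w a] that(3) by simp
  qed
  have "prefix (honest_vertex F (Suc h)) t1" "prefix (honest_vertex F (Suc h)) t2"
    using honest_vertex_prefix_of_reaching_tine[OF fork _ _ h counts] F(2,3,5,6) by auto
  then show False
    using F(4) honest_vertex[OF fork h] assms(2) unfolding disjoint_over_def by force
qed

section \<open>Monotonicity under turning honest slots adversarial\<close>

lemma nth_le_of_list_all2_le:
  "list_all2 (\<le>) w w' \<Longrightarrow> 1 \<le> j \<Longrightarrow> j \<le> length w \<Longrightarrow> w ! (j - 1) \<le> w' ! (j - 1)"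
  by (rule list_all2_nthD) auto

lemma honest_idx_of_le: "list_all2 (\<le>) w w' \<Longrightarrow> honest_idx w' j \<Longrightarrow> honest_idx w j"
  using nth_le_of_list_all2_le[of w w' j] list_all2_lengthD[of _ w w'] by (auto simp: honest_idx_def)

lemma adv_idx_of_le: "list_all2 (\<le>) w w' \<Longrightarrow> adv_idx w j \<Longrightarrow> adv_idx w' j"
  using nth_le_of_list_all2_le[of w w' j] list_all2_lengthD[of _ w w'] by (auto simp: adv_idx_def)

definition prune :: "bool list \<Rightarrow> vtx set \<Rightarrow> vtx set" where
  "prune w F = {v \<in> F. \<exists>u\<in>F. prefix v u \<and> (u = [] \<or> honest_idx w (lbl u))}"

lemma prune_subset: "prune w F \<subseteq> F"
  by (auto simp: prune_def)

lemma root_in_prune: "is_fork w0 F \<Longrightarrow> [] \<in> prune w F"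
  using is_fork_root by (auto simp: prune_def)

lemma honest_in_prune: "v \<in> F \<Longrightarrow> honest_idx w (lbl v) \<Longrightarrow> v \<in> prune w F"
  by (auto simp: prune_def)

lemma is_fork_prune:
  assumes fork: "is_fork w F" and le: "list_all2 (\<le>) w w'"
  shows "is_fork w' (prune w' F)"
  unfolding is_fork_def
proof (intro conjI ballI allI impI)
  let ?F' = "prune w' F"
  show "finite ?F'" using is_fork_finite[OF fork] prune_subset finite_subset by blast
  show "[] \<in> ?F'" using root_in_prune[OF fork] .
  show "u \<in> ?F'" if "v \<in> ?F'" "prefix u v" for u v
    using that is_fork_prefix_closed[OF fork] prefix_order.trans unfolding prune_def by blast
  show "sorted_wrt (<) (0 # map fst v)" if "v \<in> ?F'" for v
    using that prune_subset is_fork_sorted[OF fork] by blast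
  show "fst a \<le> length w'" if "v \<in> ?F'" "a \<in> set v" for v a
  proof -
    have "v \<in> F" using that(1) prune_subset by blast
    then show ?thesis using is_fork_label_le[OF fork _ that(2)] list_all2_lengthD[OF le] by simp
  qed
next
  fix j assume j: "honest_idx w' j"
  then have hj: "honest_idx w j" by (rule honest_idx_of_le[OF le])
  show "\<exists>!v. v \<in> prune w' F \<and> v \<noteq> [] \<and> lbl v = j"
  proof (rule ex1I[of _ "honest_vertex F j"])
    show "honest_vertex F j \<in> prune w' F \<and> honest_vertex F j \<noteq> [] \<and> lbl (honest_vertex F j) = j"
      using honest_vertex[OF fork hj] honest_in_prune j by auto
    show "u = honest_vertex F j" if "u \<in> prune w' F \<and> u \<noteq> [] \<and> lbl u = j" for u
      using that prune_subset by (intro honest_vertex_eqI[OF fork hj, symmetric]) auto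
  qed
next
  fix u v assume uv: "u \<in> prune w' F" "v \<in> prune w' F" "u \<noteq> []" "v \<noteq> []" "honest_idx w' (lbl u)"
    "honest_idx w' (lbl v)" "lbl u < lbl v"
  have "u \<in> F" "v \<in> F" using uv(1,2) prune_subset by auto
  then show "length u < length v"
    by (rule is_fork_honest_depth_less[OF fork _ _ uv(3,4) honest_idx_of_le[OF le uv(5)]
        honest_idx_of_le[OF le uv(6)] uv(7)])
qed

lemma closed_fork_prune:
  assumes fork: "is_fork w F" and le: "list_all2 (\<le>) w w'"
  shows "closed_fork w' (prune w' F)"
  unfolding closed_fork_def
proof (intro conjI is_fork_prune[OF assms] ballI impI)
  fix v assume v: "v \<in> prune w' F" and leaf: "\<forall>a. v @ [a] \<notin> prune w' F"
  obtain u where u: "u \<in> F" "prefix v u" "u = [] \<or> honest_idx w' (lbl u)"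
    using v unfolding prune_def by blast
  show "v = [] \<or> honest_idx w' (lbl v)"
  proof (cases "u = v")
    case False
    then obtain a z where "u = v @ a # z" using u(2) by (metis prefix_def append_Nil2 neq_Nil_conv)
    then have "prefix (v @ [a]) u" by simp
    then have "v @ [a] \<in> prune w' F"
      using u is_fork_prefix_closed[OF fork u(1)] unfolding prune_def by blast
    then show ?thesis using leaf by blast
  qed (use u in auto)
qed

lemma height_prune_le:
  assumes "is_fork w F"
  shows "height (prune w' F) \<le> height F"
  unfolding height_def
proof (rule Max_mono)
  show "length ` prune w' F \<subseteq> length ` F" using prune_subset by (rule image_mono)
  show "length ` prune w' F \<noteq> {}" using root_in_prune[OF assms] by blast
  show "finite (length ` F)" using is_fork_finite[OF assms] by simp
qed

text \<open>Cutting a tine back to its longest prefix that survives pruning can only increase its reach: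
  every vertex cut off carries a label that is adversarial for w' and lies after the new tip.\<close>

lemma reach_le_reach_prune:
  assumes fork: "is_fork w F" and le: "list_all2 (\<le>) w w'" and t: "t \<in> F"
  shows "\<exists>t'\<in>prune w' F. prefix t' t \<and> reach w F t \<le> reach w' (prune w' F) t'"
proof -
  let ?F' = "prune w' F"
  let ?kept = "\<lambda>j. j \<le> length t \<and> take j t \<in> ?F'"
  define j where "j = (GREATEST j. ?kept j)"
  have j: "j \<le> length t" "take j t \<in> ?F'"
    using GreatestI_nat[of ?kept 0 "length t"] root_in_prune[OF fork] unfolding j_def by auto
  have sorted: "sorted_wrt (<) (0 # map fst t)" by (rule is_fork_sorted[OF fork t])
  have lw: "length w' = length w" using list_all2_lengthD[OF le] by simp
  have "adv_idx w' (lbl (take p t))" if "j < p" "p \<le> length t" for p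
  proof -
    have "take p t \<notin> ?F'" using that Greatest_le_nat[of ?kept p "length t"] unfolding j_def by force
    then have "\<not> honest_idx w' (lbl (take p t))" using honest_in_prune is_fork_take[OF fork t] by blast
    then show ?thesis
      using adv_idx_iff_not_honest lbl_take_bounds[OF fork t _ that(2)] that(1) lw by simp
  qed
  then have run: "length t - j \<le> count_in (adv_idx w') (lbl (take j t)) (lbl t)"
    using adversarial_run_le_count_in[OF sorted j(1)] by simp
  have "reserve w t \<le> count_in (adv_idx w') (lbl t) (length w')"
    unfolding reserve_eq_count_in count_in_def lw using adv_idx_of_le[OF le] by (intro card_mono) auto
  moreover have "reserve w' (take j t) =
      count_in (adv_idx w') (lbl (take j t)) (lbl t) + count_in (adv_idx w') (lbl t) (length w')"
    unfolding reserve_eq_count_in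
    using lbl_take_le[OF sorted j(1)] lbl_take_le_length[OF fork t, of "length t"] lw
    by (intro count_in_split) auto
  moreover have "length t \<le> height F" by (rule length_le_height[OF fork t])
  moreover have "j \<le> height ?F'"
    using length_le_height[OF is_fork_prune[OF fork le] j(2)] j(1) by simp
  ultimately have "reach w F t \<le> reach w' ?F' (take j t)"
    using run height_prune_le[OF fork, of w'] j(1) unfolding reach_def gap_def by simp
  then show ?thesis using j(2) take_is_prefix by blast
qed

theorem mu_nonneg_mono:
  assumes le: "list_all2 (\<le>) w w'" and mu: "0 \<le> mu (take m w) (drop m w)"
  shows "0 \<le> mu (take m w') (drop m w')"
proof -
  obtain F t1 t2 where F: "closed_fork w F" "t1 \<in> F" "t2 \<in> F" "disjoint_over (length (take m w)) t1 t2"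
      "0 \<le> reach w F t1" "0 \<le> reach w F t2"
    using mu mu_nonneg_iff[of "take m w" "drop m w"] by auto
  have fork: "is_fork w F" using F(1) by (simp add: closed_fork_def)
  obtain t1' t2' where t': "t1' \<in> prune w' F" "prefix t1' t1" "reach w F t1 \<le> reach w' (prune w' F) t1'"
      "t2' \<in> prune w' F" "prefix t2' t2" "reach w F t2 \<le> reach w' (prune w' F) t2'"
    using reach_le_reach_prune[OF fork le F(2)] reach_le_reach_prune[OF fork le F(3)] by blast
  have "length (take m w') = length (take m w)" using list_all2_lengthD[OF le] by simp
  then have "disjoint_over (length (take m w')) t1' t2'"
    using F(4) t'(2,5) unfolding disjoint_over_def by (metis prefix_order.trans)
  then show ?thesis
    unfolding mu_nonneg_iff append_take_drop_id using closed_fork_prune[OF fork le] t' F(5,6)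
    by (intro exI[of _ "prune w' F"] exI[of _ t1'] exI[of _ t2']) auto
qed

section \<open>Domination of martingale strings by independent ones\<close>

lemma prob_mono_on_set_pmf:
  assumes "\<And>x. x \<in> set_pmf M \<Longrightarrow> x \<in> A \<Longrightarrow> x \<in> B"
  shows "measure_pmf.prob M A \<le> measure_pmf.prob M B"
proof -
  have "measure_pmf.prob M A = measure_pmf.prob M (A \<inter> set_pmf M)" by (simp add: measure_Int_set_pmf)
  also have "\<dots> \<le> measure_pmf.prob M B" using assms by (intro measure_pmf.finite_measure_mono) auto
  finally show ?thesis .
qed

lemma prob_bern_list_Suc:
  assumes "0 \<le> q" "q \<le> 1"
  shows "measure_pmf.prob (bern_list (Suc n) q) X =
    q * measure_pmf.prob (bern_list n q) {s. True # s \<in> X} +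
    (1 - q) * measure_pmf.prob (bern_list n q) {s. False # s \<in> X}"
proof -
  have "measure_pmf.prob (bern_list (Suc n) q) X =
      measure_pmf.expectation (bern_list (Suc n) q) (indicator X)"
    by simp
  also have "\<dots> = measure_pmf.expectation (bern_list n q)
      (\<lambda>s. q * indicator {s. True # s \<in> X} s + (1 - q) * indicator {s. False # s \<in> X} s)"
    unfolding expectation_bern_list_Suc[OF assms] by (simp add: indicator_def)
  finally show ?thesis by simp
qed

lemma sum_lists_length_Suc:
  fixes f :: "bool list \<Rightarrow> 'a :: comm_monoid_add"
  shows "(\<Sum>p | length p = Suc t. f p) = (\<Sum>p | length p = t. f (p @ [True]) + f (p @ [False]))"
proof -
  have "{p :: bool list. length p = Suc t} = (\<lambda>(p, b). p @ [b]) ` ({p. length p = t} \<times> UNIV)"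
  proof (intro set_eqI iffI)
    fix x :: "bool list" assume "x \<in> {p. length p = Suc t}"
    then have "x = butlast x @ [last x]" "length (butlast x) = t"
      by (auto intro!: append_butlast_last_id[symmetric])
    then show "x \<in> (\<lambda>(p, b). p @ [b]) ` ({p. length p = t} \<times> UNIV)"
      by (intro image_eqI[of _ _ "(butlast x, last x)"]) auto
  qed auto
  moreover have "inj_on (\<lambda>(p, b). p @ [b]) ({p :: bool list. length p = t} \<times> UNIV)"
    by (rule inj_onI) auto
  ultimately have "(\<Sum>p | length p = Suc t. f p) = (\<Sum>(p, b) \<in> {p. length p = t} \<times> UNIV. f (p @ [b]))"
    by (simp add: sum.reindex case_prod_unfold)
  also have "\<dots> = (\<Sum>p | length p = t. f (p @ [True]) + f (p @ [False]))"
    unfolding sum.cartesian_product[symmetric] by (simp add: UNIV_bool add.commute)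
  finally show ?thesis .
qed

lemma prob_prefix_split:
  assumes supp: "set_pmf P \<subseteq> {w. length w = n}" and "length p < n"
  shows "measure_pmf.prob P {w. take (length p) w = p} =
      measure_pmf.prob P {w. take (Suc (length p)) w = p @ [True]} +
      measure_pmf.prob P {w. take (Suc (length p)) w = p @ [False]}"
proof -
  have "take (Suc (length p)) w = take (length p) w @ [w ! length p]" if "w \<in> set_pmf P" for w
    using that supp assms(2) by (auto simp: take_Suc_conv_app_nth)
  then have "measure_pmf.prob P {w. take (length p) w = p} = measure_pmf.prob P
      ({w. take (Suc (length p)) w = p @ [True]} \<union> {w. take (Suc (length p)) w = p @ [False]})"
    by (intro measure_eq_AE) (auto simp: AE_measure_pmf_iff)
  also have "\<dots> = measure_pmf.prob P {w. take (Suc (length p)) w = p @ [True]} +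
      measure_pmf.prob P {w. take (Suc (length p)) w = p @ [False]}"
    by (rule measure_pmf.finite_measure_Union) auto
  finally show ?thesis .
qed

lemma weighted_shift_le:
  fixes D D1 D0 h h1 h0 q :: real
  assumes "D = D1 + D0" "D1 \<le> q * D" "h = q * h1 + (1 - q) * h0" "h0 \<le> h1"
  shows "D1 * h1 + D0 * h0 \<le> D * h"
proof -
  have "D * h - (D1 * h1 + D0 * h0) = (q * D - D1) * (h1 - h0)"
    unfolding assms(1,3) by (simp add: algebra_simps)
  moreover have "0 \<le> (q * D - D1) * (h1 - h0)" using assms(2,4) by simp
  ultimately show ?thesis by simp
qed

definition hybrid :: "bool list pmf \<Rightarrow> nat \<Rightarrow> real \<Rightarrow> bool list set \<Rightarrow> nat \<Rightarrow> real" where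
  "hybrid P n q A t = (\<Sum>p | length p = t. measure_pmf.prob P {w. take t w = p} *
      measure_pmf.prob (bern_list (n - t) q) {s. p @ s \<in> A})"

lemma hybrid_0: "hybrid P n q A 0 = measure_pmf.prob (bern_list n q) A"
proof -
  have "{p :: bool list. length p = 0} = {[]}" by auto
  then show ?thesis by (simp add: hybrid_def)
qed

lemma hybrid_full:
  assumes supp: "set_pmf P \<subseteq> {w. length w = n}"
  shows "hybrid P n q A n = measure_pmf.prob P A"
proof -
  have "measure_pmf.prob P {w. take n w = p} = pmf P p" if "length p = n" for p
    using supp that by (subst measure_pmf_single[symmetric], intro measure_eq_AE)
      (auto simp: AE_measure_pmf_iff)
  then have "hybrid P n q A n = (\<Sum>p | length p = n. if p \<in> A then pmf P p else 0)"
    unfolding hybrid_def by (intro sum.cong) auto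
  also have "\<dots> = (\<Sum>p \<in> {p. length p = n} \<inter> A. pmf P p)"
    by (rule sum.inter_restrict[OF finite_bool_lists_length, symmetric])
  also have "\<dots> = measure_pmf.prob P ({p. length p = n} \<inter> A)"
    by (rule measure_measure_pmf_finite[symmetric]) (simp add: finite_bool_lists_length)
  also have "\<dots> = measure_pmf.prob P A"
    using supp by (intro measure_eq_AE) (auto simp: AE_measure_pmf_iff)
  finally show ?thesis .
qed

lemma hybrid_Suc_le:
  assumes supp: "set_pmf P \<subseteq> {w. length w = n}"
    and mart: "\<And>p. length p = t \<Longrightarrow>
        measure_pmf.prob P {w. take t w = p \<and> w ! t} \<le> q * measure_pmf.prob P {w. take t w = p}"
    and q: "0 \<le> q" "q \<le> 1"
    and up: "\<And>u s. length u + Suc (length s) = n \<Longrightarrow> u @ False # s \<in> A \<Longrightarrow> u @ True # s \<in> A"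
    and "t < n"
  shows "hybrid P n q A (Suc t) \<le> hybrid P n q A t"
proof -
  define D where "D p = measure_pmf.prob P {w. take (length p) w = p}" for p
  define h where "h p = measure_pmf.prob (bern_list (n - length p) q) {s. p @ s \<in> A}" for p
  have "D (p @ [True]) * h (p @ [True]) + D (p @ [False]) * h (p @ [False]) \<le> D p * h p"
    if p: "length p = t" for p
  proof (rule weighted_shift_le)
    show "D p = D (p @ [True]) + D (p @ [False])"
      unfolding D_def using prob_prefix_split[OF supp, of p] p \<open>t < n\<close> by simp
    have "D (p @ [True]) = measure_pmf.prob P {w. take t w = p \<and> w ! t}"
      unfolding D_def using supp p \<open>t < n\<close>
      by (intro measure_eq_AE) (auto simp: AE_measure_pmf_iff take_Suc_conv_app_nth)
    then show "D (p @ [True]) \<le> q * D p" using mart[OF p] p by (simp add: D_def)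
    have remaining: "n - length p = Suc (n - length (p @ [True]))" using p \<open>t < n\<close> by simp
    show "h p = q * h (p @ [True]) + (1 - q) * h (p @ [False])"
      unfolding h_def by (subst remaining, subst prob_bern_list_Suc[OF q]) simp
    have "h (p @ [b]) = measure_pmf.prob (bern_list (n - Suc t) q) {s. p @ b # s \<in> A}" for b
      unfolding h_def using p by simp
    moreover have "measure_pmf.prob (bern_list (n - Suc t) q) {s. p @ False # s \<in> A}
        \<le> measure_pmf.prob (bern_list (n - Suc t) q) {s. p @ True # s \<in> A}"
      using up set_pmf_bern_list p \<open>t < n\<close> by (intro prob_mono_on_set_pmf) fastforce
    ultimately show "h (p @ [False]) \<le> h (p @ [True])" by simp
  qed
  then show ?thesis
    unfolding hybrid_def sum_lists_length_Suc
    by (intro sum_mono) (simp add: D_def h_def distrib_right[symmetric])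
qed

theorem prob_upward_closed_le_bern_list:
  assumes supp: "set_pmf P \<subseteq> {w. length w = n}"
    and mart: "\<And>t p. t < n \<Longrightarrow> length p = t \<Longrightarrow>
        measure_pmf.prob P {w. take t w = p \<and> w ! t} \<le> q * measure_pmf.prob P {w. take t w = p}"
    and q: "0 \<le> q" "q \<le> 1"
    and up: "\<And>u s. length u + Suc (length s) = n \<Longrightarrow> u @ False # s \<in> A \<Longrightarrow> u @ True # s \<in> A"
  shows "measure_pmf.prob P A \<le> measure_pmf.prob (bern_list n q) A"
proof -
  have "hybrid P n q A t \<le> hybrid P n q A 0" if "t \<le> n" for t
    using that
  proof (induction t)
    case (Suc t)
    then show ?case using hybrid_Suc_le[OF supp mart q up, of t] by simp
  qed simp
  then show ?thesis using hybrid_0 hybrid_full[OF supp] by (metis order_refl)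
qed

section \<open>Probability of \<mu> \<ge> 0\<close>

lemma bern_list_append:
  "map_pmf (\<lambda>(x, y). x @ y) (pair_pmf (bern_list m q) (bern_list k q)) = bern_list (m + k) q"
proof (induction m)
  case 0
  show ?case by (simp add: pair_return_pmf1 map_pmf_comp)
next
  case (Suc m)
  have "map_pmf (\<lambda>(x, y). x @ y) (pair_pmf (bern_list (Suc m) q) (bern_list k q)) =
      bind_pmf (bernoulli_pmf q) (\<lambda>b. map_pmf (Cons b)
        (map_pmf (\<lambda>(x, y). x @ y) (pair_pmf (bern_list m q) (bern_list k q))))"
    by (simp add: pair_pmf_def map_bind_pmf map_pmf_def bind_assoc_pmf bind_return_pmf)
  also have "\<dots> = bern_list (Suc m + k) q"
    unfolding Suc by (simp add: pair_pmf_def map_bind_pmf map_pmf_def bind_assoc_pmf bind_return_pmf)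
  finally show ?case .
qed

lemma prob_pair_pmf_concat:
  assumes "set_pmf D \<subseteq> {(x, y). length x = m}"
  shows "measure_pmf.prob D {(x, y). Q x y} =
      measure_pmf.prob (map_pmf (\<lambda>(x, y). x @ y) D) {w. Q (take m w) (drop m w)}"
proof -
  have "measure_pmf.prob D {(x, y). Q x y} = measure_pmf.prob D ((\<lambda>(x, y). x @ y) -` {w. Q (take m w) (drop m w)})"
    using assms by (intro measure_eq_AE) (auto simp: AE_measure_pmf_iff)
  then show ?thesis by simp
qed

lemma prob_mu_nonneg_le_bern:
  assumes eps: "0 < eps" "eps < 1"
    and supp: "set_pmf D \<subseteq> {(x, y). length x = m \<and> length y = k}"
    and mart: "eps_martingale eps (m + k) (map_pmf (\<lambda>(x, y). x @ y) D)"
  shows "measure_pmf.prob D {(x, y). 0 \<le> mu x y}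
      \<le> measure_pmf.prob (pair_pmf (bern_list m ((1 - eps) / 2)) (bern_list k ((1 - eps) / 2)))
          {(x, y). 0 \<le> mu x y}"
proof -
  let ?q = "(1 - eps) / 2"
  let ?A = "{w. 0 \<le> mu (take m w) (drop m w)}"
  have "u @ True # s \<in> ?A" if "u @ False # s \<in> ?A" for u s
    using mu_nonneg_mono[of "u @ False # s" "u @ True # s" m] that
    by (simp add: list_all2_appendI list_all2_refl)
  then have upward: "measure_pmf.prob (map_pmf (\<lambda>(x, y). x @ y) D) ?A
      \<le> measure_pmf.prob (bern_list (m + k) ?q) ?A"
    using supp eps mart unfolding eps_martingale_def
    by (intro prob_upward_closed_le_bern_list[where n = "m + k"]) auto
  have "measure_pmf.prob D {(x, y). 0 \<le> mu x y} = measure_pmf.prob (map_pmf (\<lambda>(x, y). x @ y) D) ?A"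
    using supp by (intro prob_pair_pmf_concat) auto
  also have "\<dots> \<le> measure_pmf.prob (map_pmf (\<lambda>(x, y). x @ y) (pair_pmf (bern_list m ?q) (bern_list k ?q))) ?A"
    using upward by (simp only: bern_list_append)
  also have "\<dots> = measure_pmf.prob (pair_pmf (bern_list m ?q) (bern_list k ?q)) {(x, y). 0 \<le> mu x y}"
    using set_pmf_bern_list by (intro prob_pair_pmf_concat[symmetric]) auto
  finally show ?thesis .
qed

lemma prob_mu_nonneg_bern_le_power:
  assumes "0 < eps" "eps \<le> 1/8"
  shows "measure_pmf.prob (pair_pmf (bern_list m ((1 - eps) / 2)) (bern_list k ((1 - eps) / 2)))
      {(x, y). 0 \<le> mu x y} \<le> (1 - eps^3 / 2) ^ k"
proof -
  interpret small_eps eps using assms by unfold_locales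
  let ?M = "pair_pmf (bern_list m q) (bern_list k q)"
  have "margin x (snd (scan y)) = 0" if "0 \<le> mu x y" for x y
  proof (rule ccontr)
    assume "margin x (snd (scan y)) \<noteq> 0"
    then have "1 \<le> margin x (snd (scan y))" by simp
    then show False using catalan_slot_of_margin mu_nonneg_imp_no_catalan_slot[OF that] by blast
  qed
  then have "{(x, y). 0 \<le> mu x y} \<subseteq> {(x, y). margin x (snd (scan y)) = 0}" by auto
  then have "measure_pmf.prob ?M {(x, y). 0 \<le> mu x y} \<le> measure_pmf.prob ?M {(x, y). margin x (snd (scan y)) = 0}"
    by (intro measure_pmf.finite_measure_mono) auto
  also have "\<dots> \<le> \<theta> ^ k" by (rule prob_margin_scan_zero)
  finally show ?thesis by (simp add: q_def \<theta>_def)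
qed

lemma one_minus_power_le_exp:
  fixes z :: real
  assumes "0 \<le> z" "z \<le> 1"
  shows "(1 - z) ^ k \<le> exp (- (z * real k))"
proof -
  have "(1 - z) ^ k \<le> exp (- z) ^ k"
    using assms by (intro power_mono) (auto simp: exp_ge_add_one_self[of "-z", simplified])
  also have "\<dots> = exp (- (z * real k))" by (simp add: exp_of_nat_mult[symmetric] mult.commute)
  finally show ?thesis .
qed

text \<open>For \<epsilon> > 1/8 the bound exceeds 1 and holds trivially.\<close>

lemma prob_mu_nonneg_bern_le_exp:
  assumes eps: "0 < eps" "eps < 1"
  shows "measure_pmf.prob (pair_pmf (bern_list m ((1 - eps) / 2)) (bern_list k ((1 - eps) / 2)))
      {(x, y). 0 \<le> mu x y} \<le> exp (- (eps ^ 3 * (1 - 8 * eps) * real k / 2))"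
proof (cases "eps \<le> 1/8")
  case True
  have "eps ^ 3 \<le> 1" using eps by (intro power_le_one) auto
  then have "(1 - eps ^ 3 / 2) ^ k \<le> exp (- (eps ^ 3 / 2 * real k))"
    using eps by (intro one_minus_power_le_exp) auto
  also have "\<dots> \<le> exp (- (eps ^ 3 * (1 - 8 * eps) * real k / 2))"
    using eps by (simp add: mult_le_cancel_left1 mult_right_mono)
  finally show ?thesis using prob_mu_nonneg_bern_le_power[OF eps(1) True, of m k] by linarith
next
  case False
  then have "eps ^ 3 * (1 - 8 * eps) * real k \<le> 0"
    using eps by (intro mult_nonpos_nonneg mult_nonneg_nonpos) auto
  then have "1 \<le> exp (- (eps ^ 3 * (1 - 8 * eps) * real k / 2))" by simp
  then show ?thesis using measure_pmf.prob_le_1 order_trans by blast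
qed

theorem mainTheorem15:
  "\<exists>C::real. \<forall>(eps::real) (m::nat) (k::nat) (D :: (bool list \<times> bool list) pmf).
     0 < eps \<and> eps < 1 \<and>
     set_pmf D \<subseteq> {(x, y). length x = m \<and> length y = k} \<and>
     eps_martingale eps (m + k) (map_pmf (\<lambda>(x, y). x @ y) D)
     \<longrightarrow>
     measure_pmf.prob D {(x, y). 0 \<le> mu x y}
       \<le> measure_pmf.prob (pair_pmf (bern_list m ((1 - eps) / 2)) (bern_list k ((1 - eps) / 2)))
            {(x, y). 0 \<le> mu x y}
     \<and> measure_pmf.prob (pair_pmf (bern_list m ((1 - eps) / 2)) (bern_list k ((1 - eps) / 2)))
            {(x, y). 0 \<le> mu x y}
       \<le> exp (- (eps ^ 3 * (1 - C * eps) * real k / 2))"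
  by (intro exI[of _ 8] allI impI conjI) (auto intro: prob_mu_nonneg_le_bern prob_mu_nonneg_bern_le_exp)

end
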